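(* Let $a,b\in(0,1)$ and $c_1,c_2>0$ with $ac_1<1$, $ac_2<1$. For every $x,y\in\mathbb Z_{\ge0}$, with all matrix products and series understood entrywise, $$\mathbf M^{\rightarrow}_x[a]\mathbf M^{\downarrow}_y[b]=(ab)^{\min\{x,y\}}(1-ab)\sum_{z\ge\max\{0,y-x\}}\mathbf M^{\downarrow}_z[b]\mathbf M^{\rightarrow}_{x-y+z}[a],$$ $$\mathbf w^t\mathbf M^{\downarrow}_x[a]=(ac_1)^x(1-ac_1)\sum_{y\ge0}\mathbf w^t\mathbf M^{\rightarrow}_y[a],\qquad \mathbf M^{\rightarrow}_x[a]\mathbf v=(ac_2)^x(1-ac_2)\sum_{y\ge0}\mathbf M^{\downarrow}_y[a]\mathbf v.$$
   Context: For $x\in\mathbb Z_{\ge0}$ and $a\in(0,1)$, $\mathbf M^{\rightarrow}_x[a]$ and $\mathbf M^{\downarrow}_x[a]$ are the infinite matrices indexed by $\mathbb Z_{\ge0}\times\mathbb Z_{\ge0}$ with entries $\mathbf M^{\rightarrow}_x[a](n,n')=a^{2x+n-n'}\mathbf 1_{n'\ge x}\mathbf 1_{x+n-n'\ge0}$ and $\mathbf M^{\downarrow}_x[a](n,n')=\mathbf M^{\rightarrow}_x[a](n',n)=a^{2x+n'-n}\mathbf 1_{n\ge x}\mathbf 1_{x+n'-n\ge0}$. The vectors $\mathbf w,\mathbf v\in\mathbb R^{\mathbb Z_{\ge0}}$ are $\mathbf w(n)=c_1^n$, $\mathbf v(n)=c_2^n$. *)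

theory Defs
  imports "HOL-Analysis.Analysis"
begin

definition Mright :: "nat \<Rightarrow> real \<Rightarrow> nat \<Rightarrow> nat \<Rightarrow> real" where
  "Mright x a n n' = (if n' \<ge> x \<and> int x + int n - int n' \<ge> 0
                      then a powi (2 * int x + int n - int n') else 0)"

definition Mdown :: "nat \<Rightarrow> real \<Rightarrow> nat \<Rightarrow> nat \<Rightarrow> real" where
  "Mdown x a n n' = Mright x a n' n"

definition matmul :: "(nat \<Rightarrow> nat \<Rightarrow> real) \<Rightarrow> (nat \<Rightarrow> nat \<Rightarrow> real) \<Rightarrow> nat \<Rightarrow> nat \<Rightarrow> real" where
  "matmul A B n n' = (\<Sum>k. A n k * B k n')"

definition vecmat :: "(nat \<Rightarrow> real) \<Rightarrow> (nat \<Rightarrow> nat \<Rightarrow> real) \<Rightarrow> nat \<Rightarrow> real" where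
  "vecmat w A n' = (\<Sum>n. w n * A n n')"

definition matvec :: "(nat \<Rightarrow> nat \<Rightarrow> real) \<Rightarrow> (nat \<Rightarrow> real) \<Rightarrow> nat \<Rightarrow> real" where
  "matvec A v n = (\<Sum>n'. A n n' * v n')"

end

theory Submission
  imports Defs
begin

text \<open>
  An entry of \<open>Mright x a \<cdot> Mdown y b\<close> is a finite
  sum over the intermediate index \<open>k\<close> of monomials \<open>a ^ (2x + n - k) * b ^ (2y + n' - k)\<close>,
  while an entry of \<open>Mdown z b \<cdot> Mright u a\<close> is a geometric series in \<open>ab\<close>: it sums to a
  single monomial divided by \<open>1 - ab\<close> and vanishes unless \<open>z \<le> n\<close> and \<open>u \<le> n'\<close>. Hence the
  series over \<open>z\<close> is a finite sum too, and after multiplication by \<open>(ab) ^ min x y * (1 - ab)\<close>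
  its terms match those of the left-hand side under \<open>z \<mapsto> k\<close> with
  \<open>x + z + k = max x y + min (x + n) (y + n')\<close>. The identities for \<open>w\<close> and \<open>v\<close> are the same
  computation with the weights \<open>c ^ n\<close> in place of one matrix; the one for \<open>v\<close> is the transpose
  of the one for \<open>w\<close>.
\<close>

lemma Mright_altdef:
  "Mright x a n n' = (if x \<le> n' \<and> n' \<le> x + n then a ^ (2 * x + n - n') else 0)"
proof (cases "x \<le> n' \<and> n' \<le> x + n")
  case True
  then have "2 * int x + int n - int n' = int (2 * x + n - n')" by auto
  then show ?thesis using True unfolding Mright_def by (simp del: of_nat_diff)
qed (auto simp: Mright_def)

lemma Mdown_altdef:
  "Mdown x a n n' = (if x \<le> n \<and> n \<le> x + n' then a ^ (2 * x + n' - n) else 0)"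
  by (simp add: Mdown_def Mright_altdef)

lemma matvec_Mright_eq_vecmat_Mdown: "matvec (Mright x a) v n = vecmat v (Mdown x a) n"
  by (simp add: matvec_def vecmat_def Mdown_def mult.commute)

lemma matvec_Mdown_eq_vecmat_Mright: "matvec (Mdown x a) v n = vecmat v (Mright x a) n"
  by (simp add: matvec_def vecmat_def Mdown_def mult.commute)

lemma sums_geometric_from:
  fixes q C :: real
  assumes "\<bar>q\<bar> < 1"
  shows "(\<lambda>k. if m \<le> k then C * q ^ (k - m) else 0) sums (C / (1 - q))"
proof -
  have "(\<lambda>i. C * q ^ i) sums (C / (1 - q))"
    using sums_mult[OF geometric_sums, of q C] assms by simp
  then have "(\<lambda>i. (\<lambda>k. if m \<le> k then C * q ^ (k - m) else 0) (i + m)) sums (C / (1 - q))"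
    by simp
  then show ?thesis by (subst (asm) sums_zero_iff_shift) auto
qed

lemma vecmat_powers_Mright:
  fixes a c :: real
  assumes "\<bar>a * c\<bar> < 1"
  shows "vecmat (\<lambda>n. c ^ n) (Mright y a) N
    = (if y \<le> N then c ^ (N - y) * a ^ y / (1 - a * c) else 0)"
proof (cases "y \<le> N")
  case True
  have "c ^ n * Mright y a n N = (if N - y \<le> n then c ^ (N - y) * a ^ y * (a * c) ^ (n - (N - y)) else 0)"
    for n
  proof (cases "N - y \<le> n")
    case le: True
    then obtain j where j: "n = (N - y) + j" by (metis le_add_diff_inverse)
    with True have "Mright y a n N = a ^ (y + j)" by (simp add: Mright_altdef)
    then show ?thesis using j by (simp add: power_add power_mult_distrib mult_ac)
  qed (auto simp: Mright_altdef)
  then show ?thesis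
    using sums_geometric_from[OF assms, of "N - y" "c ^ (N - y) * a ^ y"] True
    by (simp add: vecmat_def sums_iff)
qed (simp add: vecmat_def Mright_altdef)

lemma vecmat_powers_Mdown:
  fixes a c :: real
  shows "vecmat (\<lambda>n. c ^ n) (Mdown x a) N = (a * c) ^ x * (\<Sum>y\<le>N. c ^ (N - y) * a ^ y)"
proof -
  have "(\<Sum>y\<le>N. (a * c) ^ x * (c ^ (N - y) * a ^ y))
      = (\<Sum>n\<in>{x..x + N}. c ^ n * a ^ (2 * x + N - n))"
  proof (rule sum.reindex_bij_witness[where i = "\<lambda>n. x + N - n" and j = "\<lambda>y. x + N - y"])
    fix y assume "y \<in> {..N}"
    then have "x + N - y = (N - y) + x" "2 * x + N - (x + N - y) = y + x" by auto
    then show "c ^ (x + N - y) * a ^ (2 * x + N - (x + N - y)) = (a * c) ^ x * (c ^ (N - y) * a ^ y)"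
      by (simp only: power_add power_mult_distrib mult_ac)
  qed auto
  also have "\<dots> = vecmat (\<lambda>n. c ^ n) (Mdown x a) N"
    unfolding vecmat_def by (subst suminf_finite[of "{x..x + N}"]) (auto simp: Mdown_altdef)
  finally show ?thesis by (simp add: sum_distrib_left)
qed

lemma vecmat_powers_Mdown_expansion:
  fixes a c :: real
  assumes "\<bar>a * c\<bar> < 1"
  shows "summable (\<lambda>y. vecmat (\<lambda>n. c ^ n) (Mright y a) N)
    \<and> vecmat (\<lambda>n. c ^ n) (Mdown x a) N
      = (a * c) ^ x * (1 - a * c) * (\<Sum>y. vecmat (\<lambda>n. c ^ n) (Mright y a) N)"
proof -
  have "(\<lambda>y. vecmat (\<lambda>n. c ^ n) (Mright y a) N) sums (\<Sum>y\<le>N. c ^ (N - y) * a ^ y / (1 - a * c))"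
    using sums_If_finite_set[of "{..N}"] by (simp add: vecmat_powers_Mright[OF assms])
  then have "(\<lambda>y. vecmat (\<lambda>n. c ^ n) (Mright y a) N) sums ((\<Sum>y\<le>N. c ^ (N - y) * a ^ y) / (1 - a * c))"
    by (simp only: sum_divide_distrib)
  moreover have "1 - a * c \<noteq> 0" using assms by auto
  ultimately show ?thesis
    by (simp add: sums_iff vecmat_powers_Mdown)
qed

lemma matmul_Mright_Mdown:
  "matmul (Mright x a) (Mdown y b) n n'
    = (\<Sum>k = max x y..min (x + n) (y + n'). a ^ (2 * x + n - k) * b ^ (2 * y + n' - k))"
  unfolding matmul_def
  by (subst suminf_finite[of "{max x y..min (x + n) (y + n')}"])
    (auto simp: Mdown_altdef Mright_altdef intro!: sum.cong)

lemma matmul_Mdown_Mright: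
  fixes a b :: real and z u n n' :: nat
  assumes "\<bar>a * b\<bar> < 1"
  defines "m \<equiv> max (n - z) (n' - u)"
  shows "matmul (Mdown z b) (Mright u a) n n'
    = (if z \<le> n \<and> u \<le> n' then b ^ (2 * z + m - n) * a ^ (2 * u + m - n') / (1 - a * b) else 0)"
proof (cases "z \<le> n \<and> u \<le> n'")
  case True
  define D where "D = b ^ (2 * z + m - n) * a ^ (2 * u + m - n')"
  have "Mdown z b n k * Mright u a k n' = (if m \<le> k then D * (a * b) ^ (k - m) else 0)" for k
  proof (cases "m \<le> k")
    case le: True
    have "2 * z + k - n = (2 * z + m - n) + (k - m)" "2 * u + k - n' = (2 * u + m - n') + (k - m)"
      using le True unfolding m_def by auto
    then have "b ^ (2 * z + k - n) * a ^ (2 * u + k - n') = D * (a * b) ^ (k - m)"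
      unfolding D_def by (simp only: power_add power_mult_distrib mult_ac)
    then show ?thesis using le True by (auto simp: Mdown_altdef Mright_altdef m_def)
  qed (auto simp: Mdown_altdef Mright_altdef m_def)
  then show ?thesis
    using sums_geometric_from[OF assms(1), of m D] True by (simp add: matmul_def sums_iff D_def)
qed (auto simp: matmul_def Mdown_altdef Mright_altdef)

lemma sum_Mdown_Mright_terms_reindex:
  fixes a b :: real and x y n n' :: nat
  defines "S \<equiv> {z. y \<le> x + z \<and> z \<le> n \<and> x + z \<le> y + n'}"
    and "m \<equiv> \<lambda>z. max (n - z) (n' - (x + z - y))"
  shows "(a * b) ^ min x y * (\<Sum>z\<in>S. b ^ (2 * z + m z - n) * a ^ (2 * (x + z - y) + m z - n'))
    = (\<Sum>k = max x y..min (x + n) (y + n'). a ^ (2 * x + n - k) * b ^ (2 * y + n' - k))"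
proof -
  define r p q Q where "r = min x y" and "p = max x y"
    and "q = min (x + n) (y + n')" and "Q = max (x + n) (y + n')"
  have bounds: "r + p = x + y" "q + Q = x + n + (y + n')" "r \<le> x" "r \<le> y" "x \<le> p" "y \<le> p"
    "q \<le> x + n" "q \<le> y + n'"
    unfolding r_def p_def q_def Q_def by (simp_all add: min_def max_def)
  have S_iff: "z \<in> S \<longleftrightarrow> p \<le> x + z \<and> x + z \<le> q" for z
    unfolding S_def p_def q_def by auto
  have m_eq: "m z = Q - (x + z)" if "y \<le> x + z" for z
    unfolding m_def Q_def using that by (auto simp: max_def)
  have "(\<Sum>z\<in>S. (a * b) ^ r * (b ^ (2 * z + m z - n) * a ^ (2 * (x + z - y) + m z - n')))
    = (\<Sum>k = p..q. a ^ (2 * x + n - k) * b ^ (2 * y + n' - k))"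
  proof (rule sum.reindex_bij_witness[where i = "\<lambda>k. p + q - x - k" and j = "\<lambda>z. p + q - x - z"])
    fix z assume "z \<in> S"
    then have z: "p \<le> x + z" "x + z \<le> q" "m z = Q - (x + z)"
      using S_iff m_eq bounds by auto
    then show "p + q - x - (p + q - x - z) = z" "p + q - x - z \<in> {p..q}"
      by auto
    have "2 * x + n - (p + q - x - z) = r + (2 * (x + z - y) + m z - n')"
      "2 * y + n' - (p + q - x - z) = r + (2 * z + m z - n)"
      unfolding z(3) using z(1,2) bounds by linarith+
    then show "a ^ (2 * x + n - (p + q - x - z)) * b ^ (2 * y + n' - (p + q - x - z))
      = (a * b) ^ r * (b ^ (2 * z + m z - n) * a ^ (2 * (x + z - y) + m z - n'))"
      by (simp only: power_add power_mult_distrib mult_ac)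
  next
    fix k assume "k \<in> {p..q}"
    then show "p + q - x - (p + q - x - k) = k" "p + q - x - k \<in> S"
      using S_iff bounds by auto
  qed
  then show ?thesis
    unfolding r_def p_def q_def by (simp add: sum_distrib_left)
qed

lemma matmul_Mright_Mdown_expansion:
  fixes a b :: real and x y n n' :: nat
  assumes "\<bar>a * b\<bar> < 1"
  shows "(\<lambda>z. matmul (Mdown z b) (Mright (x + z - y) a) n n') summable_on {y - x..}
    \<and> matmul (Mright x a) (Mdown y b) n n'
      = (a * b) ^ min x y * (1 - a * b) *
        (\<Sum>\<^sub>\<infinity>z\<in>{y - x..}. matmul (Mdown z b) (Mright (x + z - y) a) n n')"
proof -
  define S where "S = {z. y \<le> x + z \<and> z \<le> n \<and> x + z \<le> y + n'}"
  define m where "m z = max (n - z) (n' - (x + z - y))" for z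
  define D where "D z = b ^ (2 * z + m z - n) * a ^ (2 * (x + z - y) + m z - n')" for z
  have "finite S" unfolding S_def by (rule finite_subset[of _ "{..n}"]) auto
  have "((\<lambda>z. matmul (Mdown z b) (Mright (x + z - y) a) n n')
      has_sum ((\<Sum>z\<in>S. D z) / (1 - a * b))) {y - x..}"
  proof (rule has_sum_finite_neutralI[OF \<open>finite S\<close>])
    show "S \<subseteq> {y - x..}" by (auto simp: S_def)
    show "matmul (Mdown z b) (Mright (x + z - y) a) n n' = 0" if "z \<in> {y - x..} - S" for z
      using that by (auto simp: matmul_Mdown_Mright[OF assms] S_def)
    show "(\<Sum>z\<in>S. D z) / (1 - a * b) = (\<Sum>z\<in>S. matmul (Mdown z b) (Mright (x + z - y) a) n n')"
      by (auto simp: sum_divide_distrib matmul_Mdown_Mright[OF assms] S_def D_def m_def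
          intro!: sum.cong)
  qed
  moreover have "1 - a * b \<noteq> 0" using assms by auto
  ultimately show ?thesis
    using sum_Mdown_Mright_terms_reindex[of a b x y n n']
    by (simp add: has_sum_iff matmul_Mright_Mdown S_def D_def m_def)
qed

theorem proposition2p21:
  fixes a b c1 c2 :: real and x y :: nat
  assumes "0 < a" "a < 1" "0 < b" "b < 1" "0 < c1" "0 < c2"
    and "a * c1 < 1" "a * c2 < 1"
  defines "w \<equiv> (\<lambda>n. c1 ^ n)" and "v \<equiv> (\<lambda>n. c2 ^ n)"
  shows "(\<forall>n n'. (\<lambda>z. matmul (Mdown z b) (Mright (x + z - y) a) n n') summable_on {y - x..}
              \<and> matmul (Mright x a) (Mdown y b) n n'
                = (a * b) ^ min x y * (1 - a * b) *
                  (\<Sum>\<^sub>\<infinity>z\<in>{y - x..}. matmul (Mdown z b) (Mright (x + z - y) a) n n'))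
    \<and> (\<forall>n'. summable (\<lambda>y. vecmat w (Mright y a) n')
              \<and> vecmat w (Mdown x a) n'
                = (a * c1) ^ x * (1 - a * c1) * (\<Sum>y. vecmat w (Mright y a) n'))
    \<and> (\<forall>n. summable (\<lambda>y. matvec (Mdown y a) v n)
              \<and> matvec (Mright x a) v n
                = (a * c2) ^ x * (1 - a * c2) * (\<Sum>y. matvec (Mdown y a) v n))"
proof -
  have "\<bar>a * b\<bar> < 1" "\<bar>a * c1\<bar> < 1" "\<bar>a * c2\<bar> < 1"
    using assms mult_strict_mono[of a 1 b 1] by auto
  then show ?thesis
    unfolding w_def v_def matvec_Mright_eq_vecmat_Mdown matvec_Mdown_eq_vecmat_Mright
    by (simp add: matmul_Mright_Mdown_expansion vecmat_powers_Mdown_expansion)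
qed
end
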